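(* Let $(V,\langle\cdot\,,\cdot\rangle_V)$ be an admissible $\mathrm{Cl}_{r,s}$-module with $s>0$, and let $J_{z_k}$, $k=1,\ldots,r+s$, be the representations of the orthonormal generators $z_1,\ldots,z_{r+s}$ of $\mathrm{Cl}_{r,s}$. Then: (1) the scalar product space $(V,\langle\cdot\,,\cdot\rangle_V)$ is neutral, i.e. the maximal dimensions of subspaces on which the restriction of $\langle\cdot\,,\cdot\rangle_V$ is positive definite, respectively negative definite, coincide; in particular $\dim V$ is even; (2) if $W$ is an admissible sub-module of a $\mathrm{Cl}_{r,s}$-module $(V,\langle\cdot\,,\cdot\rangle_V)$, then its orthogonal complement $W^\perp=\{v\in V:\langle w,v\rangle_V=0\ \forall w\in W\}$ is also an admissible sub-module. Hence an admissible $\mathrm{Cl}_{r,s}$-module $(V,\langle\cdot\,,\cdot\rangle_V)$ decomposes into admissible sub-modules.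
   Context: A scalar product is a real symmetric non-degenerate bilinear form. $\mathbb R^{r,s}$ is $\mathbb R^{r+s}$ with the scalar product whose quadratic form is $x_1^2+\dots+x_r^2-x_{r+1}^2-\dots-x_{r+s}^2$, and $\mathrm{Cl}_{r,s}$ is the Clifford algebra generated by $\mathbb R^{r,s}$ with relation $z^2=-\langle z,z\rangle\cdot1$; orthonormal generators $z_1,\ldots,z_{r+s}$ satisfy $\langle z_i,z_j\rangle=0$ ($i\neq j$), $\langle z_i,z_i\rangle=1$ for $i\le r$, $=-1$ for $i>r$. A $\mathrm{Cl}_{r,s}$-module is a real vector space $V$ with a representation $J\colon\mathrm{Cl}_{r,s}\to\mathrm{End}(V)$, so $J_z^2=-\langle z,z\rangle\mathrm{Id}_V$ for $z\in\mathbb R^{r,s}$. It is admissible if $V$ carries a scalar product $\langle\cdot\,,\cdot\rangle_V$ with $\langle J_zu,v\rangle_V=-\langle u,J_zv\rangle_V$ for all $z\in\mathbb R^{r,s}$, $u,v\in V$. An admissible sub-module of an admissible module $(V,\langle\cdot\,,\cdot\rangle_V)$ is a Clifford sub-module $W$ such that the restriction of $\langle\cdot\,,\cdot\rangle_V$ to $W$ is an admissible scalar product on $W$ (in particular non-degenerate). *)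

theory Defs
  imports "HOL-Analysis.Analysis"
begin

definition scalar_product :: "('v::real_vector \<Rightarrow> 'v \<Rightarrow> real) \<Rightarrow> bool" where
  "scalar_product B \<longleftrightarrow> bilinear B \<and> (\<forall>u v. B u v = B v u)
     \<and> (\<forall>u. (\<forall>v. B u v = 0) \<longrightarrow> u = 0)"

text \<open>Signature of the orthonormal generators z_0, ..., z_(r+s-1) of R^(r,s) (0-based):
  the quadratic form value is 1 for k < r and -1 otherwise.\<close>
definition eta :: "nat \<Rightarrow> nat \<Rightarrow> real" where
  "eta r k = (if k < r then 1 else -1)"

text \<open>A Cl_(r,s)-module structure on V, given by the images J k of the orthonormal generators:
  linear maps satisfying the Clifford relations J_k J_l + J_l J_k = -2 <z_k,z_l> Id.\<close>
definition clifford_module :: "nat \<Rightarrow> nat \<Rightarrow> (nat \<Rightarrow> 'v::real_vector \<Rightarrow> 'v) \<Rightarrow> bool" where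
  "clifford_module r s J \<longleftrightarrow>
     (\<forall>k<r+s. linear (J k)) \<and>
     (\<forall>k<r+s. \<forall>l<r+s. \<forall>v. J k (J l v) + J l (J k v) = (if k = l then - 2 * eta r k else 0) *\<^sub>R v)"

definition admissible_module ::
  "nat \<Rightarrow> nat \<Rightarrow> (nat \<Rightarrow> 'v::real_vector \<Rightarrow> 'v) \<Rightarrow> ('v \<Rightarrow> 'v \<Rightarrow> real) \<Rightarrow> bool" where
  "admissible_module r s J B \<longleftrightarrow> clifford_module r s J \<and> scalar_product B \<and>
     (\<forall>k<r+s. \<forall>u v. B (J k u) v = - B u (J k v))"

definition pos_def_subspace :: "('v::real_vector \<Rightarrow> 'v \<Rightarrow> real) \<Rightarrow> 'v set \<Rightarrow> bool" where
  "pos_def_subspace B U \<longleftrightarrow> subspace U \<and> (\<forall>u\<in>U. u \<noteq> 0 \<longrightarrow> B u u > 0)"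

definition neg_def_subspace :: "('v::real_vector \<Rightarrow> 'v \<Rightarrow> real) \<Rightarrow> 'v set \<Rightarrow> bool" where
  "neg_def_subspace B U \<longleftrightarrow> subspace U \<and> (\<forall>u\<in>U. u \<noteq> 0 \<longrightarrow> B u u < 0)"

definition max_pos_dim :: "('v::euclidean_space \<Rightarrow> 'v \<Rightarrow> real) \<Rightarrow> nat" where
  "max_pos_dim B = Max {dim U | U. pos_def_subspace B U}"

definition max_neg_dim :: "('v::euclidean_space \<Rightarrow> 'v \<Rightarrow> real) \<Rightarrow> nat" where
  "max_neg_dim B = Max {dim U | U. neg_def_subspace B U}"

definition neutral :: "('v::euclidean_space \<Rightarrow> 'v \<Rightarrow> real) \<Rightarrow> bool" where
  "neutral B \<longleftrightarrow> max_pos_dim B = max_neg_dim B"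

definition clifford_submodule :: "nat \<Rightarrow> nat \<Rightarrow> (nat \<Rightarrow> 'v::real_vector \<Rightarrow> 'v) \<Rightarrow> 'v set \<Rightarrow> bool" where
  "clifford_submodule r s J W \<longleftrightarrow> subspace W \<and> (\<forall>k<r+s. \<forall>w\<in>W. J k w \<in> W)"

text \<open>Admissible sub-module: Clifford sub-module on which the restricted form is an admissible
  scalar product. Bilinearity, symmetry and skew-symmetry of the J_k are inherited from V,
  so the only additional content is non-degeneracy of the restriction.\<close>
definition admissible_submodule ::
  "nat \<Rightarrow> nat \<Rightarrow> (nat \<Rightarrow> 'v::real_vector \<Rightarrow> 'v) \<Rightarrow> ('v \<Rightarrow> 'v \<Rightarrow> real) \<Rightarrow> 'v set \<Rightarrow> bool" where
  "admissible_submodule r s J B W \<longleftrightarrow> clifford_submodule r s J W \<and>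
     (\<forall>w\<in>W. (\<forall>u\<in>W. B w u = 0) \<longrightarrow> w = 0)"

definition orth_compl :: "('v \<Rightarrow> 'v \<Rightarrow> real) \<Rightarrow> 'v set \<Rightarrow> 'v set" where
  "orth_compl B W = {v. \<forall>w\<in>W. B w v = 0}"

end

theory Submission imports Defs begin

text \<open>Any generator \<open>j = J\<^sub>z\<close> with \<open>\<langle>z,z\<rangle> = -1\<close> (available as \<open>s > 0\<close>) is an involution that is
  skew for the scalar product. Hence \<open>j\<close> is an anti-isometry, exchanging positive and negative
  definite subspaces, which gives neutrality. Its \<open>\<pm>1\<close>-eigenspaces are totally isotropic, so each
  has dimension at most \<open>dim V / 2\<close>; as they span \<open>V\<close>, both have dimension exactly \<open>dim V / 2\<close>.
  For a non-degenerate sub-module \<open>W\<close>, skewness of the \<open>J\<^sub>z\<close> makes \<open>W\<^sup>\<perp>\<close> a sub-module, and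
  \<open>dim W + dim W\<^sup>\<perp> = dim V\<close> together with \<open>W \<inter> W\<^sup>\<perp> = 0\<close> gives \<open>V = W \<oplus> W\<^sup>\<perp>\<close>.\<close>

definition nondegenerate_on :: "('v::zero \<Rightarrow> 'v \<Rightarrow> real) \<Rightarrow> 'v set \<Rightarrow> bool" where
  "nondegenerate_on B W \<longleftrightarrow> (\<forall>w\<in>W. (\<forall>u\<in>W. B w u = 0) \<longrightarrow> w = 0)"

lemma bilinear_inner_representation:
  fixes B :: "'v::euclidean_space \<Rightarrow> 'v \<Rightarrow> real"
  assumes "bilinear B"
  obtains A where "linear A" "\<And>u v. B u v = A u \<bullet> v"
proof
  define A where "A = (\<lambda>u. \<Sum>b\<in>Basis. B u b *\<^sub>R b)"
  have lR: "linear (B u)" and lL: "linear (\<lambda>x. B x v)" for u v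
    using assms by (simp_all add: bilinear_def)
  show "B u v = A u \<bullet> v" for u v
  proof -
    have "B u v = B u (\<Sum>b\<in>Basis. (v \<bullet> b) *\<^sub>R b)" by (simp add: euclidean_representation)
    also have "\<dots> = (\<Sum>b\<in>Basis. (v \<bullet> b) * B u b)"
      by (simp add: linear_sum[OF lR] linear_scale[OF lR])
    also have "\<dots> = A u \<bullet> v"
      unfolding A_def inner_sum_left by (simp add: inner_commute mult.commute)
    finally show ?thesis .
  qed
  show "linear A" unfolding A_def
    by (rule linearI) (simp_all add: linear_add[OF lL] linear_scale[OF lL] scaleR_add_left
        sum.distrib scaleR_right.sum)
qed

lemma subspace_orth_compl:
  assumes "bilinear B"
  shows "subspace (orth_compl B W)"
proof -
  have "linear (B w)" for w using assms by (simp add: bilinear_def)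
  then show ?thesis
    unfolding subspace_def orth_compl_def by (simp add: linear_0 linear_add linear_scale)
qed

lemma dim_orth_compl:
  fixes B :: "'v::euclidean_space \<Rightarrow> 'v \<Rightarrow> real"
  assumes "scalar_product B" "subspace W"
  shows "dim (orth_compl B W) + dim W = DIM('v)"
proof -
  obtain A where lin: "linear A" and rep: "\<And>u v. B u v = A u \<bullet> v"
    using assms(1) bilinear_inner_representation unfolding scalar_product_def by blast
  have "inj A"
  proof (rule injI)
    fix x y assume "A x = A y"
    then have "\<forall>v. B (x - y) v = 0" by (simp add: rep linear_diff[OF lin] inner_diff_left)
    then show "x = y" using assms(1) unfolding scalar_product_def by (metis right_minus_eq)
  qed
  then have "dim (A ` W) = dim W"
    using dim_image_eq[OF lin] by (meson inj_on_subset subset_UNIV)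
  moreover have "orth_compl B W = {y \<in> UNIV. \<forall>x \<in> A ` W. orthogonal x y}"
    by (auto simp: orth_compl_def orthogonal_def rep)
  ultimately show ?thesis
    using dim_subspace_orthogonal_to_vectors[of "A ` W" UNIV] assms(2) lin
    by (simp add: linear_subspace_image)
qed

lemma totally_isotropic_dim_le:
  fixes B :: "'v::euclidean_space \<Rightarrow> 'v \<Rightarrow> real"
  assumes "scalar_product B" "subspace U" "U \<subseteq> orth_compl B U"
  shows "2 * dim U \<le> DIM('v)"
  using dim_subset[OF assms(3)] dim_orth_compl[OF assms(1,2)] by simp

lemma direct_sum_decomposition:
  fixes W U :: "'v::euclidean_space set"
  assumes "subspace W" "subspace U" "W \<inter> U = {0}" "dim W + dim U = DIM('v)"
  shows "\<exists>w\<in>W. \<exists>u\<in>U. v = w + u"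
proof -
  let ?S = "{x + y |x y. x \<in> W \<and> y \<in> U}"
  have "dim ?S = DIM('v)"
    using dim_sums_Int[OF assms(1,2)] assms(3,4) by simp
  then have "span ?S = UNIV" by (rule dim_eq_full[THEN iffD1])
  moreover have "subspace ?S"
    using subspace_sums[OF assms(1,2)] by (simp add: set_plus_def)
  ultimately have "?S = UNIV" by (simp add: span_eq_iff[THEN iffD2])
  then show ?thesis by blast
qed

lemma orth_compl_direct_sum:
  fixes B :: "'v::euclidean_space \<Rightarrow> 'v \<Rightarrow> real"
  assumes "scalar_product B" "subspace W" "nondegenerate_on B W"
  shows "W \<inter> orth_compl B W = {0}" and "\<exists>w\<in>W. \<exists>u\<in>orth_compl B W. v = w + u"
proof -
  have sO: "subspace (orth_compl B W)"
    using assms(1) subspace_orth_compl unfolding scalar_product_def by blast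
  have "v = 0" if "v \<in> W \<inter> orth_compl B W" for v
    using that assms(1,3) unfolding nondegenerate_on_def orth_compl_def scalar_product_def
    by auto
  then show int: "W \<inter> orth_compl B W = {0}"
    using assms(2) sO by (auto simp: subspace_0)
  show "\<exists>w\<in>W. \<exists>u\<in>orth_compl B W. v = w + u"
    using direct_sum_decomposition[OF assms(2) sO int] dim_orth_compl[OF assms(1,2)] by simp
qed

lemma nondegenerate_on_orth_compl:
  fixes B :: "'v::euclidean_space \<Rightarrow> 'v \<Rightarrow> real"
  assumes "scalar_product B" "subspace W" "nondegenerate_on B W"
  shows "nondegenerate_on B (orth_compl B W)"
  unfolding nondegenerate_on_def
proof (intro ballI impI)
  fix v assume v: "v \<in> orth_compl B W" and vO: "\<forall>u\<in>orth_compl B W. B v u = 0"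
  have lR: "linear (B v)" and sym: "\<And>x y. B x y = B y x"
    using assms(1) by (simp_all add: scalar_product_def bilinear_def)
  have "B v x = 0" for x
  proof -
    obtain w u where "w \<in> W" "u \<in> orth_compl B W" "x = w + u"
      using orth_compl_direct_sum(2)[OF assms] by blast
    moreover have "B v w = 0" using v \<open>w \<in> W\<close> sym[of v w] by (simp add: orth_compl_def)
    ultimately show ?thesis using vO by (simp add: linear_add[OF lR])
  qed
  then show "v = 0" using assms(1) by (simp add: scalar_product_def)
qed

lemma neutral_if_anti_isometry:
  fixes B :: "'v::euclidean_space \<Rightarrow> 'v \<Rightarrow> real"
  assumes "linear j" "inj j" "\<And>u. B (j u) (j u) = - B u u"
  shows "neutral B"
proof -
  have dim_j: "dim (j ` U) = dim U" for U
    using dim_image_eq[OF assms(1)] assms(2) by (meson inj_on_subset subset_UNIV)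
  have "neg_def_subspace B (j ` U)" if "pos_def_subspace B U" for U
    using that assms(1,3) unfolding pos_def_subspace_def neg_def_subspace_def
    by (auto simp: linear_subspace_image linear_0)
  moreover have "pos_def_subspace B (j ` U)" if "neg_def_subspace B U" for U
    using that assms(1,3) unfolding pos_def_subspace_def neg_def_subspace_def
    by (auto simp: linear_subspace_image linear_0)
  ultimately have "{dim U | U. pos_def_subspace B U} = {dim U | U. neg_def_subspace B U}"
    using dim_j by (smt (verit) Collect_cong)
  then show ?thesis by (simp add: neutral_def max_pos_dim_def max_neg_dim_def)
qed

lemma even_dim_if_skew_involution:
  fixes B :: "'v::euclidean_space \<Rightarrow> 'v \<Rightarrow> real"
  assumes sp: "scalar_product B" and lin: "linear j" and inv: "\<And>v. j (j v) = v"
    and skew: "\<And>u v. B (j u) v = - B u (j v)"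
  shows "even DIM('v)"
proof -
  define Ep where "Ep = {v. j v = v}"
  define Em where "Em = {v. j v = - v}"
  have lL: "linear (\<lambda>x. B x v)" and lR: "linear (B v)" for v
    using sp by (simp_all add: scalar_product_def bilinear_def)
  have sEp: "subspace Ep" and sEm: "subspace Em"
    unfolding Ep_def Em_def subspace_def by (simp_all add: lin linear_0 linear_add linear_scale)
  have "Ep \<subseteq> orth_compl B Ep"
  proof
    fix u assume u: "u \<in> Ep"
    have "B w u = 0" if "w \<in> Ep" for w
      using skew[of w u] that u by (simp add: Ep_def)
    then show "u \<in> orth_compl B Ep" by (simp add: orth_compl_def)
  qed
  then have dEp: "2 * dim Ep \<le> DIM('v)" using totally_isotropic_dim_le[OF sp sEp] by blast
  have "Em \<subseteq> orth_compl B Em"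
  proof
    fix u assume u: "u \<in> Em"
    have "B w u = 0" if "w \<in> Em" for w
      using skew[of w u] that u by (simp add: Em_def linear_neg[OF lL] linear_neg[OF lR])
    then show "u \<in> orth_compl B Em" by (simp add: orth_compl_def)
  qed
  then have dEm: "2 * dim Em \<le> DIM('v)" using totally_isotropic_dim_le[OF sp sEm] by blast
  have "{x + y |x y. x \<in> Ep \<and> y \<in> Em} = UNIV"
  proof safe
    fix v :: 'v
    have "(1/2) *\<^sub>R (v + j v) \<in> Ep"
      unfolding Ep_def by (simp add: inv linear_scale[OF lin] linear_add[OF lin] add.commute)
    moreover have "(1/2) *\<^sub>R (v - j v) \<in> Em"
      unfolding Em_def by (simp add: inv linear_scale[OF lin] linear_diff[OF lin] algebra_simps)
    moreover have "v = (1/2) *\<^sub>R (v + j v) + (1/2) *\<^sub>R (v - j v)"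
      by (simp add: algebra_simps scaleR_2[symmetric])
    ultimately show "\<exists>x y. v = x + y \<and> x \<in> Ep \<and> y \<in> Em" by blast
  qed simp
  moreover have "Ep \<inter> Em = {0}"
  proof -
    have "v = 0" if "v = - v" for v :: 'v
      using that by (metis eq_neg_iff_add_eq_0 scaleR_2 scaleR_eq_0_iff zero_neq_numeral)
    then show ?thesis by (auto simp: Ep_def Em_def linear_0[OF lin])
  qed
  ultimately have "dim Ep + dim Em = DIM('v)" using dim_sums_Int[OF sEp sEm] by simp
  then have "DIM('v) = 2 * dim Ep" using dEp dEm by linarith
  then show ?thesis by simp
qed

lemma clifford_module_negative_generator_involution:
  assumes "clifford_module r s J" "r \<le> k" "k < r + s"
  shows "J k (J k v) = v"
proof -
  have "J k (J k v) + J k (J k v) = 2 *\<^sub>R v"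
    using assms unfolding clifford_module_def eta_def by auto
  then have "2 *\<^sub>R J k (J k v) = 2 *\<^sub>R v" by (simp add: scaleR_2)
  then show ?thesis by simp
qed

lemma admissible_submodule_orth_compl:
  fixes B :: "'v::euclidean_space \<Rightarrow> 'v \<Rightarrow> real"
  assumes adm: "admissible_module r s J B" and W: "admissible_submodule r s J B W"
  shows "admissible_submodule r s J B (orth_compl B W)"
proof -
  have sp: "scalar_product B" and skew: "\<And>k u v. k < r+s \<Longrightarrow> B (J k u) v = - B u (J k v)"
    using adm unfolding admissible_module_def by blast+
  have sW: "subspace W" and JW: "\<And>k w. k < r+s \<Longrightarrow> w \<in> W \<Longrightarrow> J k w \<in> W"
    and ndW: "nondegenerate_on B W"
    using W by (auto simp: admissible_submodule_def clifford_submodule_def nondegenerate_on_def)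
  have "J k v \<in> orth_compl B W" if "k < r+s" "v \<in> orth_compl B W" for k v
    using that JW skew by (fastforce simp: orth_compl_def)
  moreover have "subspace (orth_compl B W)"
    using sp subspace_orth_compl unfolding scalar_product_def by blast
  ultimately show ?thesis
    using nondegenerate_on_orth_compl[OF sp sW ndW]
    unfolding admissible_submodule_def clifford_submodule_def nondegenerate_on_def by blast
qed

theorem proposition2p1:
  fixes r s :: nat and J :: "nat \<Rightarrow> 'v::euclidean_space \<Rightarrow> 'v" and B :: "'v \<Rightarrow> 'v \<Rightarrow> real"
  assumes "admissible_module r s J B" and "s > 0"
  shows "neutral B \<and> even DIM('v) \<and>
    (\<forall>W. admissible_submodule r s J B W \<longrightarrow>
       admissible_submodule r s J B (orth_compl B W) \<and>
       W \<inter> orth_compl B W = {0} \<and>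
       (\<forall>v. \<exists>w\<in>W. \<exists>u\<in>orth_compl B W. v = w + u))"
proof -
  have sp: "scalar_product B" and cm: "clifford_module r s J"
    using assms(1) unfolding admissible_module_def by blast+
  have r: "r < r + s" using assms(2) by simp
  have lin: "linear (J r)" using cm r by (simp add: clifford_module_def)
  have inv: "J r (J r v) = v" for v
    using clifford_module_negative_generator_involution[OF cm order_refl r] .
  have skew: "B (J r u) v = - B u (J r v)" for u v
    using assms(1) r unfolding admissible_module_def by blast
  have "neutral B"
    using neutral_if_anti_isometry[OF lin] inv skew by (metis injI)
  moreover have "even DIM('v)"
    using even_dim_if_skew_involution[OF sp lin] inv skew by blast
  moreover have "W \<inter> orth_compl B W = {0} \<and> (\<forall>v. \<exists>w\<in>W. \<exists>u\<in>orth_compl B W. v = w + u)"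
    if "admissible_submodule r s J B W" for W
    using that orth_compl_direct_sum[OF sp]
    by (simp add: admissible_submodule_def clifford_submodule_def nondegenerate_on_def)
  ultimately show ?thesis using admissible_submodule_orth_compl[OF assms(1)] by blast
qed

end
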